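(* Let $U$ be an infinite complex matrix (rows and columns indexed by positive integers) with finitely many nonzero entries in every row and every column, and suppose $U^*U=I$. Then the rows of $U$ are pairwise orthogonal if and only if every row of $U$ has norm $0$ or $1$.
   Context: $U^*$ denotes the Hermitian conjugate of $U$; $I$ is the infinite identity matrix; for rows $r_i,r_k$, $\langle r_k|r_i\rangle=\sum_j u_{kj}^*u_{ij}$ and $\|r_i\|^2=\langle r_i|r_i\rangle$. *)

theory Defs
  imports "HOL-Analysis.Analysis"
begin

text \<open>Infinite complex matrices, rows and columns indexed by natural numbers
  (index 0 plays the role of the first row/column).\<close>

type_synonym infmat = "nat \<Rightarrow> nat \<Rightarrow> complex"

definition row_finite :: "infmat \<Rightarrow> bool" where
  "row_finite U \<longleftrightarrow> (\<forall>i. finite {j. U i j \<noteq> 0})"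

definition col_finite :: "infmat \<Rightarrow> bool" where
  "col_finite U \<longleftrightarrow> (\<forall>j. finite {i. U i j \<noteq> 0})"

definition hconj :: "infmat \<Rightarrow> infmat" where
  "hconj U = (\<lambda>i j. cnj (U j i))"

definition mmult :: "infmat \<Rightarrow> infmat \<Rightarrow> infmat" where
  "mmult A B = (\<lambda>i k. \<Sum>\<^sub>\<infinity>j. A i j * B j k)"

definition ident :: infmat where
  "ident = (\<lambda>i j. if i = j then 1 else 0)"

definition row_inner :: "infmat \<Rightarrow> nat \<Rightarrow> nat \<Rightarrow> complex" where
  "row_inner U k i = (\<Sum>\<^sub>\<infinity>j. cnj (U k j) * U i j)"

definition row_norm :: "infmat \<Rightarrow> nat \<Rightarrow> real" where
  "row_norm U i = sqrt (Re (row_inner U i i))"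

end

theory Submission
  imports Defs
begin

(* The Gram matrix G k i = row_inner U k i of the rows is U U*, and U* U = I makes it
   idempotent: G G = U (U* U) U* = G. Since G is also Hermitian, the diagonal entry
   n = |r_i|^2 satisfies n = sum_k |G k i|^2 = n^2 + sum_{k ~= i} |G k i|^2.
   Hence row i is orthogonal to all other rows iff n = n^2, i.e. iff |r_i| is 0 or 1.
   Finiteness of rows and columns makes every sum involved finite, so the products
   can be reassociated. *)

lemma infsum_eq_sum_superset:
  assumes "finite S" "\<And>x. x \<notin> S \<Longrightarrow> f x = 0"
  shows "infsum f UNIV = sum f S"
proof -
  have "infsum f UNIV = infsum f S"
    by (rule infsum_cong_neutral) (use assms in auto)
  also have "\<dots> = sum f S"
    using assms(1) by (rule infsum_finite)
  finally show ?thesis .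
qed

lemma row_inner_commute: "row_inner U i k = cnj (row_inner U k i)"
  unfolding row_inner_def infsum_cnj[symmetric] by (simp add: mult.commute)

lemma row_inner_eq_sum:
  assumes "finite S" "{j. U i j \<noteq> 0} \<subseteq> S"
  shows "row_inner U k i = (\<Sum>j\<in>S. cnj (U k j) * U i j)"
  unfolding row_inner_def by (rule infsum_eq_sum_superset) (use assms in auto)

lemma sum_col_inner_eq_ident:
  assumes "mmult (hconj U) U = ident" "finite K" "{m. U m j \<noteq> 0} \<subseteq> K"
  shows "(\<Sum>m\<in>K. cnj (U m j) * U m l) = ident j l"
proof -
  have "ident j l = (\<Sum>\<^sub>\<infinity>m. cnj (U m j) * U m l)"
    using assms(1)[symmetric] by (simp add: mmult_def hconj_def fun_eq_iff)
  also have "\<dots> = (\<Sum>m\<in>K. cnj (U m j) * U m l)"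
    by (rule infsum_eq_sum_superset) (use assms(2,3) in auto)
  finally show ?thesis ..
qed

lemma finite_row_inner_support:
  assumes "row_finite U" "col_finite U"
  shows "finite {k. row_inner U k i \<noteq> 0}"
proof -
  define S where "S = {j. U i j \<noteq> 0}"
  have "finite S"
    using assms(1) by (simp add: S_def row_finite_def)
  have "row_inner U k i = 0" if "k \<notin> (\<Union>j\<in>S. {m. U m j \<noteq> 0})" for k
    using that row_inner_eq_sum[OF \<open>finite S\<close>, of U i k] by (auto simp: S_def intro!: sum.neutral)
  then have "{k. row_inner U k i \<noteq> 0} \<subseteq> (\<Union>j\<in>S. {m. U m j \<noteq> 0})"
    by blast
  moreover have "finite (\<Union>j\<in>S. {m. U m j \<noteq> 0})"
    using \<open>finite S\<close> assms(2) by (auto simp: col_finite_def)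
  ultimately show ?thesis
    by (rule finite_subset)
qed

lemma sum_row_inner_idempotent:
  assumes rf: "row_finite U" and cf: "col_finite U" and id: "mmult (hconj U) U = ident"
    and K: "finite K" "{k. row_inner U k i \<noteq> 0} \<subseteq> K"
  shows "(\<Sum>k\<in>K. row_inner U i k * row_inner U k i) = row_inner U i i"
proof -
  define S where "S = {j. U i j \<noteq> 0}"
  \<comment> \<open>L also contains the columns' supports, so that U* U = I applies as finite sums over L.\<close>
  define L where "L = K \<union> (\<Union>j\<in>S. {m. U m j \<noteq> 0})"
  have S: "finite S"
    using rf by (simp add: S_def row_finite_def)
  have supp_S: "{j. U i j \<noteq> 0} \<subseteq> S"
    by (simp add: S_def)
  have L: "finite L"
    unfolding L_def using K(1) S cf by (auto simp: col_finite_def)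
  have col_L: "{m. U m j \<noteq> 0} \<subseteq> L" if "j \<in> S" for j
    using that by (auto simp: L_def)
  have "(\<Sum>k\<in>K. row_inner U i k * row_inner U k i) = (\<Sum>k\<in>L. row_inner U i k * row_inner U k i)"
    using K L by (intro sum.mono_neutral_left) (auto simp: L_def)
  also have "\<dots> = (\<Sum>k\<in>L. \<Sum>j\<in>S. \<Sum>l\<in>S. (U i j * cnj (U i l)) * (cnj (U k j) * U k l))"
    unfolding row_inner_commute[of U i] row_inner_eq_sum[of S U i, OF S supp_S]
    by (intro sum.cong refl, subst sum.swap, simp add: cnj_sum sum_product mult_ac)
  also have "\<dots> = (\<Sum>j\<in>S. \<Sum>l\<in>S. \<Sum>k\<in>L. (U i j * cnj (U i l)) * (cnj (U k j) * U k l))"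
    by (simp add: sum.swap[of _ L] sum.swap[of _ L S])
  also have "\<dots> = (\<Sum>j\<in>S. \<Sum>l\<in>S. (U i j * cnj (U i l)) * ident j l)"
    by (intro sum.cong refl) (simp add: sum_distrib_left[symmetric] sum_col_inner_eq_ident[OF id L col_L])
  also have "\<dots> = (\<Sum>j\<in>S. cnj (U i j) * U i j)"
    using S by (simp add: ident_def if_distrib sum.delta mult.commute cong: if_cong)
  also have "\<dots> = row_inner U i i"
    using S by (simp add: row_inner_eq_sum S_def)
  finally show ?thesis .
qed

lemma row_inner_self_eq_sum_norm_square:
  assumes "row_finite U" "col_finite U" "mmult (hconj U) U = ident"
    and "finite K" "{k. row_inner U k i \<noteq> 0} \<subseteq> K"
  shows "row_inner U i i = of_real (\<Sum>k\<in>K. (cmod (row_inner U k i))\<^sup>2)"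
proof -
  have "row_inner U i i = (\<Sum>k\<in>K. row_inner U i k * row_inner U k i)"
    using sum_row_inner_idempotent[OF assms] ..
  also have "\<dots> = (\<Sum>k\<in>K. cnj (row_inner U k i) * row_inner U k i)"
    by (simp only: row_inner_commute[of U i])
  also have "\<dots> = (\<Sum>k\<in>K. of_real ((cmod (row_inner U k i))\<^sup>2))"
    by (simp add: complex_norm_square mult.commute del: of_real_power)
  finally show ?thesis
    by simp
qed

lemma row_orthogonal_iff_row_norm_0_or_1:
  assumes rf: "row_finite U" and cf: "col_finite U" and id: "mmult (hconj U) U = ident"
  shows "(\<forall>k. k \<noteq> i \<longrightarrow> row_inner U k i = 0) \<longleftrightarrow> row_norm U i = 0 \<or> row_norm U i = 1"
proof -
  define K where "K = {k. row_inner U k i \<noteq> 0}"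
  define n where "n = Re (row_inner U i i)"
  have K: "finite K"
    unfolding K_def using rf cf by (rule finite_row_inner_support)
  have diag: "row_inner U i i = of_real (\<Sum>k\<in>insert i K. (cmod (row_inner U k i))\<^sup>2)"
    using K by (intro row_inner_self_eq_sum_norm_square[OF rf cf id]) (auto simp: K_def)
  have n_sum: "n = (\<Sum>k\<in>insert i K. (cmod (row_inner U k i))\<^sup>2)"
    unfolding n_def diag by simp
  have n_diag: "row_inner U i i = of_real n"
    unfolding n_sum by (rule diag)
  have "n \<ge> 0"
    unfolding n_sum by (rule sum_nonneg) simp
  have "n = (cmod (row_inner U i i))\<^sup>2 + (\<Sum>k\<in>K - {i}. (cmod (row_inner U k i))\<^sup>2)"
    unfolding n_sum using K by (rule sum.insert_remove)
  moreover have "(cmod (row_inner U i i))\<^sup>2 = n\<^sup>2"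
    by (simp add: n_diag)
  ultimately have "(\<Sum>k\<in>K - {i}. (cmod (row_inner U k i))\<^sup>2) = n - n\<^sup>2"
    by linarith
  moreover have "(\<Sum>k\<in>K - {i}. (cmod (row_inner U k i))\<^sup>2) = 0
      \<longleftrightarrow> (\<forall>k. k \<noteq> i \<longrightarrow> row_inner U k i = 0)"
    using K by (subst sum_nonneg_eq_0_iff) (auto simp: K_def)
  ultimately have "(\<forall>k. k \<noteq> i \<longrightarrow> row_inner U k i = 0) \<longleftrightarrow> n = n\<^sup>2"
    by simp
  also have "\<dots> \<longleftrightarrow> n = 0 \<or> n = 1"
    by (auto simp: power2_eq_square)
  also have "\<dots> \<longleftrightarrow> row_norm U i = 0 \<or> row_norm U i = 1"
    using \<open>n \<ge> 0\<close> by (simp add: row_norm_def flip: n_def)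
  finally show ?thesis .
qed

theorem lemma3:
  fixes U :: infmat
  assumes "row_finite U" and "col_finite U"
    and "mmult (hconj U) U = ident"
  shows "(\<forall>i k. i \<noteq> k \<longrightarrow> row_inner U k i = 0) \<longleftrightarrow>
         (\<forall>i. row_norm U i = 0 \<or> row_norm U i = 1)"
proof -
  have "(\<forall>i k. i \<noteq> k \<longrightarrow> row_inner U k i = 0) \<longleftrightarrow> (\<forall>i. \<forall>k. k \<noteq> i \<longrightarrow> row_inner U k i = 0)"
    by metis
  also have "\<dots> \<longleftrightarrow> (\<forall>i. row_norm U i = 0 \<or> row_norm U i = 1)"
    by (simp only: row_orthogonal_iff_row_norm_0_or_1[OF assms])
  finally show ?thesis .
qed

end
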